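(* Let $K$ be a division ring and $M,N\ge2$ integers. Suppose $G$ is a torsion-free group and $c,d\in K[G]$ of ranks $M$ and $N$ respectively both contain the identity of $G$ in their supports and satisfy $cd=1$. Write $c=r_0c_0+\dots+r_{M-1}c_{M-1}$ and $d=s_0d_0+\dots+s_{N-1}d_{N-1}$ with pairwise distinct $c_i\in G$, pairwise distinct $d_j\in G$, nonzero $r_i,s_j\in K$ and $c_0=d_0=1$. Let $\sigma$ be the partition of $\{0,\dots,M-1\}\times\{0,\dots,N-1\}$ with $(i,j)\sim_\sigma(i',j')$ iff $c_id_j=c_{i'}d_{j'}$, and let $\pi\le\sigma$ be any partition realizable with $r_0,\dots,r_{M-1},s_0,\dots,s_{N-1}$. Suppose that for all $(m,n)$ with $2\le m\le M$, $2\le n\le N$, $(m,n)\ne(M,N)$, there is no torsion-free group $G'$ and $x,y\in K[G']$ with $\operatorname{rank}(x)=m$, $\operatorname{rank}(y)=n$, $xy=1$. Then $\pi$ has no proper invariant subgrids.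
   Context: $K[G]$ is the group ring; the rank of an element is the number of group elements with nonzero coefficient. $\pi\le\sigma$ means every block of $\pi$ is contained in a block of $\sigma$; $(i,j)\sim_\pi(i',j')$ means same block. $\pi$ is realizable with nonzero $r_i,s_j\in K$ if for each block $E$, $\sum_{(i,j)\in E}r_is_j$ equals $1$ if $(0,0)\in E$, else $0$. An invariant subgrid of a partition $\pi$ of $\{0,\dots,M-1\}\times\{0,\dots,N-1\}$ is a pair $(R,C)$ with $0\in R\subseteq\{0,\dots,M-1\}$, $0\in C\subseteq\{0,\dots,N-1\}$, $|R|\ge2$, $|C|\ge2$, such that whenever $(i,j)\in R\times C$ and $(i,j)\sim_\pi(i',j')$ then $(i',j')\in R\times C$; it is proper if $|R|<M$ or $|C|<N$. *)

theory Defs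
  imports "HOL-Algebra.Group" "HOL-Library.Disjoint_Sets"
begin

definition torsion_free :: "('g, 'b) monoid_scheme \<Rightarrow> bool" where
  "torsion_free G \<longleftrightarrow> group G \<and>
     (\<forall>x\<in>carrier G. \<forall>n::nat. n > 0 \<and> x [^]\<^bsub>G\<^esub> n = \<one>\<^bsub>G\<^esub> \<longrightarrow> x = \<one>\<^bsub>G\<^esub>)"

definition gsupp :: "('g \<Rightarrow> 'k::zero) \<Rightarrow> 'g set" where
  "gsupp a = {g. a g \<noteq> 0}"

definition grp_ring_elem :: "('g, 'b) monoid_scheme \<Rightarrow> ('g \<Rightarrow> 'k::zero) \<Rightarrow> bool" where
  "grp_ring_elem G a \<longleftrightarrow> finite (gsupp a) \<and> gsupp a \<subseteq> carrier G"

definition grank :: "('g \<Rightarrow> 'k::zero) \<Rightarrow> nat" where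
  "grank a = card (gsupp a)"

definition gr_mult :: "('g, 'b) monoid_scheme \<Rightarrow> ('g \<Rightarrow> 'k::ring) \<Rightarrow> ('g \<Rightarrow> 'k) \<Rightarrow> 'g \<Rightarrow> 'k" where
  "gr_mult G a b g =
     (\<Sum>p\<in>{(h, k). h \<in> gsupp a \<and> k \<in> gsupp b \<and> h \<otimes>\<^bsub>G\<^esub> k = g}. a (fst p) * b (snd p))"

definition gr_one :: "('g, 'b) monoid_scheme \<Rightarrow> 'g \<Rightarrow> 'k::{zero,one}" where
  "gr_one G g = (if g = \<one>\<^bsub>G\<^esub> then 1 else 0)"

definition grid :: "nat \<Rightarrow> nat \<Rightarrow> (nat \<times> nat) set" where
  "grid M N = {..<M} \<times> {..<N}"

definition same_block :: "'a set set \<Rightarrow> 'a \<Rightarrow> 'a \<Rightarrow> bool" where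
  "same_block P x y \<longleftrightarrow> (\<exists>B\<in>P. x \<in> B \<and> y \<in> B)"

definition refines :: "'a set set \<Rightarrow> 'a set set \<Rightarrow> bool" where
  "refines P Q \<longleftrightarrow> (\<forall>B\<in>P. \<exists>B'\<in>Q. B \<subseteq> B')"

definition realizable ::
  "(nat \<times> nat) set set \<Rightarrow> (nat \<Rightarrow> 'k::ring_1) \<Rightarrow> (nat \<Rightarrow> 'k) \<Rightarrow> bool" where
  "realizable P r s \<longleftrightarrow>
     (\<forall>E\<in>P. (\<Sum>(i, j)\<in>E. r i * s j) = (if (0, 0) \<in> E then 1 else 0))"

definition invariant_subgrid ::
  "(nat \<times> nat) set set \<Rightarrow> nat \<Rightarrow> nat \<Rightarrow> nat set \<Rightarrow> nat set \<Rightarrow> bool" where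
  "invariant_subgrid P M N R C \<longleftrightarrow>
     0 \<in> R \<and> R \<subseteq> {..<M} \<and> 0 \<in> C \<and> C \<subseteq> {..<N} \<and> card R \<ge> 2 \<and> card C \<ge> 2 \<and>
     (\<forall>i j i' j'. (i, j) \<in> R \<times> C \<and> same_block P (i, j) (i', j') \<longrightarrow> (i', j') \<in> R \<times> C)"

definition proper_invariant_subgrid ::
  "(nat \<times> nat) set set \<Rightarrow> nat \<Rightarrow> nat \<Rightarrow> nat set \<Rightarrow> nat set \<Rightarrow> bool" where
  "proper_invariant_subgrid P M N R C \<longleftrightarrow>
     invariant_subgrid P M N R C \<and> (card R < M \<or> card C < N)"

end

theory Submission
  imports Defs "HOL-Algebra.Generated_Groups" "HOL-Library.Countable_Set"
begin

text \<open>
  Suppose \<open>(R, C)\<close> is a proper invariant subgrid of \<open>\<pi>\<close>. Restrict \<open>c\<close> to \<open>{c\<^sub>i | i \<in> R}\<close> and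
  \<open>d\<close> to \<open>{d\<^sub>j | j \<in> C}\<close>. The coefficient of \<open>g\<close> in the product of the restrictions is the sum
  of \<open>r\<^sub>i s\<^sub>j\<close> over the cells \<open>(i, j) \<in> R \<times> C\<close> with \<open>c\<^sub>i d\<^sub>j = g\<close>. Since \<open>\<pi> \<le> \<sigma>\<close> and
  \<open>R \<times> C\<close> is invariant, this set of cells is a union of blocks of \<open>\<pi>\<close>, so realizability
  makes the coefficient \<open>1\<close> at the identity and \<open>0\<close> elsewhere. The restrictions are thus
  inverse to each other, of ranks \<open>|R|\<close> and \<open>|C|\<close>, with \<open>(|R|, |C|) \<noteq> (M, N)\<close>. Their supports
  generate a countable torsion-free subgroup, which can be relabelled by natural numbers;
  this contradicts the minimality hypothesis, which speaks about groups on \<open>nat\<close>.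
\<close>

definition gr_restrict :: "('g \<Rightarrow> 'k::zero) \<Rightarrow> 'g set \<Rightarrow> 'g \<Rightarrow> 'k" where
  "gr_restrict a A g = (if g \<in> A then a g else 0)"

lemma gsupp_gr_restrict: "gsupp (gr_restrict a A) = A \<inter> gsupp a"
  by (auto simp: gsupp_def gr_restrict_def)

lemma grp_ring_elem_gr_restrict: "grp_ring_elem G a \<Longrightarrow> grp_ring_elem G (gr_restrict a A)"
  by (auto simp: grp_ring_elem_def gsupp_gr_restrict)

lemma grank_gr_restrict:
  "inj_on f I \<Longrightarrow> f ` I \<subseteq> gsupp a \<Longrightarrow> grank (gr_restrict a (f ` I)) = card I"
  by (simp add: grank_def gsupp_gr_restrict Int_absorb2 card_image)

lemma same_block_refines: "refines P Q \<Longrightarrow> same_block P x y \<Longrightarrow> same_block Q x y"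
  unfolding refines_def same_block_def by (meson subsetD)

lemma sum_realizable_union_of_blocks:
  fixes r s :: "nat \<Rightarrow> 'k::ring_1"
  assumes part: "partition_on X P" and "finite X" and real: "realizable P r s" and "T \<subseteq> X"
    and closed: "\<And>E p q. E \<in> P \<Longrightarrow> p \<in> E \<Longrightarrow> p \<in> T \<Longrightarrow> q \<in> E \<Longrightarrow> q \<in> T"
  shows "(\<Sum>(i, j)\<in>T. r i * s j) = (if (0, 0) \<in> T then 1 else 0)"
proof -
  define Q where "Q = {E \<in> P. E \<subseteq> T}"
  have blocks_sub: "E \<subseteq> X" if "E \<in> P" for E
    using that partition_onD1[OF part] by auto
  have T_eq: "T = \<Union>Q"
  proof (intro equalityI subsetI)
    fix p assume "p \<in> T"
    then obtain E where "E \<in> P" "p \<in> E"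
      using \<open>T \<subseteq> X\<close> partition_onD1[OF part] by auto
    with closed[OF this] \<open>p \<in> T\<close> show "p \<in> \<Union>Q" by (auto simp: Q_def)
  qed (auto simp: Q_def)
  have disj: "E \<inter> E' = {}" if "E \<in> P" "E' \<in> P" "E \<noteq> E'" for E E'
    using disjointD[OF partition_onD2[OF part] that] .
  have "finite Q"
    using blocks_sub \<open>finite X\<close> by (auto simp: Q_def intro: finite_subset[of _ "Pow X"])
  have "(\<Sum>(i, j)\<in>T. r i * s j) = (\<Sum>E\<in>Q. \<Sum>(i, j)\<in>E. r i * s j)"
    unfolding T_eq using finite_subset[OF blocks_sub \<open>finite X\<close>] disj
    by (subst sum.Union_disjoint) (auto simp: Q_def)
  also have "\<dots> = (\<Sum>E\<in>Q. if (0, 0) \<in> E then 1 else 0)"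
    using real by (simp add: realizable_def Q_def)
  also have "\<dots> = (if (0, 0) \<in> T then 1 else 0)"
  proof (cases "(0, 0) \<in> T")
    case True
    then obtain E0 where E0: "E0 \<in> Q" "(0, 0) \<in> E0"
      using T_eq by auto
    have "(\<Sum>E\<in>Q. if (0, 0) \<in> E then 1 else 0) = (\<Sum>E\<in>Q. if E = E0 then (1::'k) else 0)"
      using E0 disj by (intro sum.cong) (auto simp: Q_def)
    then show ?thesis
      using E0 \<open>finite Q\<close> True by simp
  next
    case False
    then show ?thesis
      using T_eq by (auto intro: sum.neutral)
  qed
  finally show ?thesis .
qed

lemma gr_mult_gr_restrict:
  fixes c d :: "'g \<Rightarrow> 'k::ring"
  assumes inj: "inj_on cc R" "inj_on dd C" and supp: "cc ` R \<subseteq> gsupp c" "dd ` C \<subseteq> gsupp d"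
    and coeff: "\<forall>i\<in>R. r i = c (cc i)" "\<forall>j\<in>C. s j = d (dd j)"
  shows "gr_mult G (gr_restrict c (cc ` R)) (gr_restrict d (dd ` C)) g =
         (\<Sum>(i, j)\<in>{(i, j)\<in>R \<times> C. cc i \<otimes>\<^bsub>G\<^esub> dd j = g}. r i * s j)"
    (is "_ = sum _ ?T")
proof -
  have pairs: "{(h, k). h \<in> gsupp (gr_restrict c (cc ` R)) \<and> k \<in> gsupp (gr_restrict d (dd ` C)) \<and>
      h \<otimes>\<^bsub>G\<^esub> k = g} = map_prod cc dd ` ?T"
    using supp by (auto simp: gsupp_gr_restrict)
  have "inj_on (map_prod cc dd) ?T"
    using map_prod_inj_on[OF inj] by (rule inj_on_subset) auto
  then have "gr_mult G (gr_restrict c (cc ` R)) (gr_restrict d (dd ` C)) g =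
      (\<Sum>p\<in>?T. gr_restrict c (cc ` R) (cc (fst p)) * gr_restrict d (dd ` C) (dd (snd p)))"
    unfolding gr_mult_def pairs by (simp add: sum.reindex)
  also have "\<dots> = (\<Sum>(i, j)\<in>?T. r i * s j)"
    using coeff by (intro sum.cong) (auto simp: gr_restrict_def)
  finally show ?thesis .
qed

lemma gr_mult_restrict_invariant_subgrid:
  fixes c d :: "'g \<Rightarrow> 'k::ring_1"
  assumes "monoid G" and one: "cc 0 = \<one>\<^bsub>G\<^esub>" "dd 0 = \<one>\<^bsub>G\<^esub>"
    and inj: "inj_on cc {..<M}" "inj_on dd {..<N}"
    and supp: "cc ` {..<M} \<subseteq> gsupp c" "dd ` {..<N} \<subseteq> gsupp d"
    and coeff: "\<forall>i<M. r i = c (cc i)" "\<forall>j<N. s j = d (dd j)"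
    and part: "partition_on (grid M N) P" and real: "realizable P r s"
    and blocks: "\<And>i j i' j'. (i, j) \<in> grid M N \<Longrightarrow> (i', j') \<in> grid M N \<Longrightarrow>
      same_block P (i, j) (i', j') \<Longrightarrow> cc i \<otimes>\<^bsub>G\<^esub> dd j = cc i' \<otimes>\<^bsub>G\<^esub> dd j'"
    and inv: "invariant_subgrid P M N R C"
  shows "gr_mult G (gr_restrict c (cc ` R)) (gr_restrict d (dd ` C)) = gr_one G"
proof
  fix g
  have R: "0 \<in> R" "R \<subseteq> {..<M}" and C: "0 \<in> C" "C \<subseteq> {..<N}"
    and closed: "\<And>i j i' j'. (i, j) \<in> R \<times> C \<Longrightarrow> same_block P (i, j) (i', j') \<Longrightarrow> (i', j') \<in> R \<times> C"
    using inv unfolding invariant_subgrid_def by blast+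
  have RC: "R \<times> C \<subseteq> grid M N"
    using R C by (auto simp: grid_def)
  define T where "T = {(i, j)\<in>R \<times> C. cc i \<otimes>\<^bsub>G\<^esub> dd j = g}"
  have "gr_mult G (gr_restrict c (cc ` R)) (gr_restrict d (dd ` C)) g = (\<Sum>(i, j)\<in>T. r i * s j)"
    unfolding T_def using R(2) C(2) coeff
    by (intro gr_mult_gr_restrict inj_on_subset[OF inj(1)] inj_on_subset[OF inj(2)]
        order_trans[OF image_mono supp(1)] order_trans[OF image_mono supp(2)]) auto
  also have "\<dots> = (if (0, 0) \<in> T then 1 else 0)"
  proof (rule sum_realizable_union_of_blocks[OF part _ real])
    show "finite (grid M N)" "T \<subseteq> grid M N"
      using RC by (auto simp: grid_def T_def)
    fix E p q assume "E \<in> P" "p \<in> E" "p \<in> T" "q \<in> E"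
    obtain i j i' j' where pq: "p = (i, j)" "q = (i', j')"
      by fastforce
    have same: "same_block P (i, j) (i', j')"
      using \<open>E \<in> P\<close> \<open>p \<in> E\<close> \<open>q \<in> E\<close> pq unfolding same_block_def by blast
    have ij: "(i, j) \<in> R \<times> C"
      using \<open>p \<in> T\<close> pq by (simp add: T_def)
    have i'j': "(i', j') \<in> R \<times> C"
      by (rule closed[OF ij same])
    have "cc i \<otimes>\<^bsub>G\<^esub> dd j = cc i' \<otimes>\<^bsub>G\<^esub> dd j'"
      using ij i'j' RC by (intro blocks[OF _ _ same]) auto
    then show "q \<in> T"
      using \<open>p \<in> T\<close> pq i'j' by (simp add: T_def)
  qed
  also have "\<dots> = gr_one G g"
    using R C one \<open>monoid G\<close> by (auto simp: T_def gr_one_def monoid.l_one)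
  finally show "gr_mult G (gr_restrict c (cc ` R)) (gr_restrict d (dd ` C)) g = gr_one G g" .
qed

lemma (in monoid) foldr_mult_append:
  assumes "set xs \<subseteq> carrier G" "set ys \<subseteq> carrier G"
  shows "foldr (\<otimes>) (xs @ ys) \<one> = foldr (\<otimes>) xs \<one> \<otimes> foldr (\<otimes>) ys \<one>"
proof -
  have closed: "foldr (\<otimes>) zs \<one> \<in> carrier G" if "set zs \<subseteq> carrier G" for zs
    using that by (induction zs) auto
  show ?thesis
    using assms by (induction xs) (auto simp: closed m_assoc)
qed

lemma (in group) countable_generate:
  assumes "countable A" "A \<subseteq> carrier G"
  shows "countable (generate G A)"
proof -
  let ?words = "lists (A \<union> m_inv G ` A)"
  have letters: "A \<union> m_inv G ` A \<subseteq> carrier G"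
    using assms(2) by auto
  have "generate G A \<subseteq> (\<lambda>xs. foldr (\<otimes>) xs \<one>) ` ?words"
  proof
    fix z assume "z \<in> generate G A"
    then show "z \<in> (\<lambda>xs. foldr (\<otimes>) xs \<one>) ` ?words"
    proof (induction rule: generate.induct)
      case one
      show ?case by (rule image_eqI[of _ _ "[]"]) auto
    next
      case (incl h)
      then show ?case using assms(2) by (intro image_eqI[of _ _ "[h]"]) auto
    next
      case (inv h)
      then show ?case using assms(2) by (intro image_eqI[of _ _ "[inv h]"]) auto
    next
      case (eng h1 h2)
      then obtain xs ys where "xs \<in> ?words" "ys \<in> ?words"
        and "h1 = foldr (\<otimes>) xs \<one>" "h2 = foldr (\<otimes>) ys \<one>"
        by blast
      moreover have "set xs \<subseteq> carrier G" "set ys \<subseteq> carrier G"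
        using \<open>xs \<in> ?words\<close> \<open>ys \<in> ?words\<close> letters by auto
      ultimately show ?case
        by (intro image_eqI[of _ _ "xs @ ys"]) (auto simp: foldr_mult_append simp del: foldr_append)
    qed
  qed
  moreover have "countable ?words"
    using assms(1) by simp
  ultimately show ?thesis
    by (meson countable_image countable_subset)
qed

definition image_group :: "('g \<Rightarrow> 'h) \<Rightarrow> ('g, 'b) monoid_scheme \<Rightarrow> 'h monoid" where
  "image_group h G =
     \<lparr>carrier = h ` carrier G,
      mult = \<lambda>a b. h (inv_into (carrier G) h a \<otimes>\<^bsub>G\<^esub> inv_into (carrier G) h b),
      one = h \<one>\<^bsub>G\<^esub>\<rparr>"

lemma (in group) iso_image_group:
  assumes "inj_on h (carrier G)"
  shows "h \<in> iso G (image_group h G)"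
  using assms by (auto simp: iso_def hom_def bij_betw_def image_group_def)

lemma (in group) group_image_group:
  assumes "inj_on h (carrier G)"
  shows "group (image_group h G)"
proof -
  have "h \<in> hom G (image_group h G)"
    using iso_image_group[OF assms] by (simp add: iso_def)
  then have "monoid ((image_group h G)\<lparr>carrier := h ` carrier G, one := h \<one>\<rparr>)"
    by (rule hom_imp_img_monoid)
  then have "monoid (image_group h G)"
    by (simp add: image_group_def)
  then show ?thesis
    using iso_imp_group is_isoI[OF iso_image_group[OF assms]] by blast
qed

lemma torsion_free_iso:
  assumes tf: "torsion_free G" and "group H" and iso: "h \<in> iso G H"
  shows "torsion_free H"
  unfolding torsion_free_def
proof (intro conjI \<open>group H\<close> ballI allI impI)
  fix a and n :: nat
  assume "a \<in> carrier H" and pow: "0 < n \<and> a [^]\<^bsub>H\<^esub> n = \<one>\<^bsub>H\<^esub>"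
  have "group G"
    using tf by (simp add: torsion_free_def)
  then interpret group_hom G H h
    using \<open>group H\<close> iso by (simp add: group_hom_def group_hom_axioms_def iso_def)
  have bij: "bij_betw h (carrier G) (carrier H)"
    using iso by (simp add: iso_def)
  then obtain u where u: "u \<in> carrier G" "a = h u"
    using \<open>a \<in> carrier H\<close> by (auto simp: bij_betw_def)
  have "h (u [^]\<^bsub>G\<^esub> n) = h \<one>\<^bsub>G\<^esub>"
    using pow u by (simp add: hom_nat_pow)
  then have "u [^]\<^bsub>G\<^esub> n = \<one>\<^bsub>G\<^esub>"
    using bij u by (metis bij_betw_imp_inj_on inj_onD G.nat_pow_closed G.one_closed)
  then have "u = \<one>\<^bsub>G\<^esub>"
    using tf pow u by (auto simp: torsion_free_def)
  then show "a = \<one>\<^bsub>H\<^esub>"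
    using u by simp
qed

definition gr_map :: "('g, 'b) monoid_scheme \<Rightarrow> ('g \<Rightarrow> 'h) \<Rightarrow> ('g \<Rightarrow> 'k::zero) \<Rightarrow> 'h \<Rightarrow> 'k" where
  "gr_map G h x a = (if a \<in> h ` carrier G then x (inv_into (carrier G) h a) else 0)"

lemma gr_map_apply: "inj_on h (carrier G) \<Longrightarrow> u \<in> carrier G \<Longrightarrow> gr_map G h x (h u) = x u"
  by (simp add: gr_map_def)

lemma gsupp_gr_map:
  "inj_on h (carrier G) \<Longrightarrow> gsupp x \<subseteq> carrier G \<Longrightarrow> gsupp (gr_map G h x) = h ` gsupp x"
  by (auto simp: gsupp_def gr_map_def subset_iff inj_on_eq_iff)

lemma grp_ring_elem_gr_map:
  assumes "h \<in> mon G H" "grp_ring_elem G x"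
  shows "grp_ring_elem H (gr_map G h x)"
  using assms by (auto simp: grp_ring_elem_def mon_def hom_def gsupp_gr_map)

lemma grank_gr_map:
  assumes "inj_on h (carrier G)" "gsupp x \<subseteq> carrier G"
  shows "grank (gr_map G h x) = grank x"
  using assms unfolding grank_def gsupp_gr_map[OF assms]
  by (simp add: card_image inj_on_subset)

lemma gr_mult_gr_map:
  assumes "monoid G" and mon: "h \<in> mon G H"
    and supp: "gsupp x \<subseteq> carrier G" "gsupp y \<subseteq> carrier G"
  shows "gr_mult H (gr_map G h x) (gr_map G h y) = gr_map G h (gr_mult G x y)"
proof
  fix a
  have hom: "h \<in> hom G H" and inj: "inj_on h (carrier G)"
    using mon by (auto simp: mon_def)
  define P where "P = {(u, v). u \<in> gsupp x \<and> v \<in> gsupp y \<and> h (u \<otimes>\<^bsub>G\<^esub> v) = a}"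
  have pairs: "{(p, q). p \<in> gsupp (gr_map G h x) \<and> q \<in> gsupp (gr_map G h y) \<and> p \<otimes>\<^bsub>H\<^esub> q = a}
      = map_prod h h ` P"
    using supp hom by (auto simp: gsupp_gr_map[OF inj] P_def hom_mult subset_iff)
  have "inj_on (map_prod h h) P"
    by (rule inj_on_subset[OF map_prod_inj_on[OF inj inj]]) (use supp in \<open>auto simp: P_def\<close>)
  then have "gr_mult H (gr_map G h x) (gr_map G h y) a =
      (\<Sum>p\<in>P. gr_map G h x (h (fst p)) * gr_map G h y (h (snd p)))"
    unfolding gr_mult_def pairs by (simp add: sum.reindex)
  also have "\<dots> = (\<Sum>(u, v)\<in>P. x u * y v)"
    using supp by (intro sum.cong) (auto simp: gr_map_apply[OF inj] P_def subset_iff)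
  also have "\<dots> = gr_map G h (gr_mult G x y) a"
  proof (cases "a \<in> h ` carrier G")
    case True
    then obtain b where b: "b \<in> carrier G" "a = h b"
      by blast
    have "P = {(u, v). u \<in> gsupp x \<and> v \<in> gsupp y \<and> u \<otimes>\<^bsub>G\<^esub> v = b}"
      using supp b inj monoid.m_closed[OF \<open>monoid G\<close>] by (auto simp: P_def subset_iff inj_on_eq_iff)
    then show ?thesis
      using b by (simp add: gr_mult_def gr_map_apply[OF inj] case_prod_unfold)
  next
    case False
    then have "P = {}"
      using supp monoid.m_closed[OF \<open>monoid G\<close>] by (auto simp: P_def subset_iff)
    with False show ?thesis
      by (simp add: gr_map_def)
  qed
  finally show "gr_mult H (gr_map G h x) (gr_map G h y) a = gr_map G h (gr_mult G x y) a" .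
qed

lemma gr_map_gr_one:
  assumes "group G" "group H" "h \<in> mon G H"
  shows "gr_map G h (gr_one G) = gr_one H"
proof
  fix a
  interpret group_hom G H h
    using assms by (simp add: group_hom_def group_hom_axioms_def mon_def)
  have inj: "inj_on h (carrier G)"
    using assms(3) by (simp add: mon_def)
  show "gr_map G h (gr_one G) a = gr_one H a"
  proof (cases "a \<in> h ` carrier G")
    case True
    then obtain u where "u \<in> carrier G" "a = h u"
      by blast
    then show ?thesis
      using inj by (auto simp: gr_map_apply gr_one_def inj_on_eq_iff simp flip: hom_one)
  next
    case False
    then have "a \<noteq> \<one>\<^bsub>H\<^esub>"
      by (metis G.one_closed hom_one image_eqI)
    with False show ?thesis
      by (simp add: gr_map_def gr_one_def)
  qed
qed

lemma torsion_free_subgroup_generated: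
  "torsion_free G \<Longrightarrow> torsion_free (subgroup_generated G A)"
  using group.carrier_subgroup_generated_subset[of G A]
  by (auto simp: torsion_free_def group.group_subgroup_generated pow_subgroup_generated)

lemma gr_mult_subgroup_generated: "gr_mult (subgroup_generated G A) = gr_mult G"
  by (simp add: gr_mult_def fun_eq_iff)

lemma gr_one_subgroup_generated: "gr_one (subgroup_generated G A) = gr_one G"
  by (simp add: gr_one_def fun_eq_iff)

lemma ex_nat_torsion_free_inverse_pair:
  fixes x y :: "'g \<Rightarrow> 'k::ring_1"
  assumes tf: "torsion_free G" and x: "grp_ring_elem G x" and y: "grp_ring_elem G y"
    and xy: "gr_mult G x y = gr_one G"
  shows "\<exists>(H :: nat monoid) (x' :: nat \<Rightarrow> 'k) y'. group H \<and> torsion_free H \<and>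
    grp_ring_elem H x' \<and> grp_ring_elem H y' \<and> grank x' = grank x \<and> grank y' = grank y \<and>
    gr_mult H x' y' = gr_one H"
proof -
  have "group G"
    using tf by (simp add: torsion_free_def)
  define A where "A = gsupp x \<union> gsupp y"
  define K where "K = subgroup_generated G A"
  have A: "finite A" "A \<subseteq> carrier G"
    using x y by (auto simp: grp_ring_elem_def A_def)
  have carrier_K: "carrier K = generate G A"
    using A by (simp add: K_def carrier_subgroup_generated Int_absorb1)
  have "group K" "torsion_free K"
    using \<open>group G\<close> tf by (simp_all add: K_def group.group_subgroup_generated torsion_free_subgroup_generated)
  have supp: "gsupp x \<subseteq> carrier K" "gsupp y \<subseteq> carrier K"
    unfolding carrier_K A_def by (auto intro: generate.incl)
  then have elems: "grp_ring_elem K x" "grp_ring_elem K y"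
    using x y by (simp_all add: grp_ring_elem_def)
  have xy_K: "gr_mult K x y = gr_one K"
    using xy by (simp add: K_def gr_mult_subgroup_generated gr_one_subgroup_generated)
  define h where "h = to_nat_on (carrier K)"
  have "countable (carrier K)"
    unfolding carrier_K using group.countable_generate[OF \<open>group G\<close> _ A(2)] A(1) by (simp add: countable_finite)
  then have inj: "inj_on h (carrier K)"
    unfolding h_def by (rule inj_on_to_nat_on)
  define H where "H = image_group h K"
  have "group H"
    unfolding H_def by (rule group.group_image_group[OF \<open>group K\<close> inj])
  have iso: "h \<in> iso K H"
    unfolding H_def by (rule group.iso_image_group[OF \<open>group K\<close> inj])
  then have mon: "h \<in> mon K H"
    by (simp add: iso_iff_mon_epi)
  have "gr_mult H (gr_map K h x) (gr_map K h y) = gr_one H"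
    using gr_mult_gr_map[OF group.is_monoid[OF \<open>group K\<close>] mon supp] xy_K
      gr_map_gr_one[OF \<open>group K\<close> \<open>group H\<close> mon] by simp
  moreover have "torsion_free H"
    by (rule torsion_free_iso[OF \<open>torsion_free K\<close> \<open>group H\<close> iso])
  moreover have "grp_ring_elem H (gr_map K h x)" "grp_ring_elem H (gr_map K h y)"
    using grp_ring_elem_gr_map[OF mon] elems by blast+
  moreover have "grank (gr_map K h x) = grank x" "grank (gr_map K h y) = grank y"
    using grank_gr_map[OF inj] supp by blast+
  ultimately show ?thesis
    using \<open>group H\<close> by blast
qed

theorem lemma6p9:
  fixes G :: "'g monoid"
    and c d :: "'g \<Rightarrow> 'k::division_ring"
    and M N :: nat
    and cc dd :: "nat \<Rightarrow> 'g"
    and r s :: "nat \<Rightarrow> 'k"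
    and \<sigma> \<pi> :: "(nat \<times> nat) set set"
  assumes "M \<ge> 2" and "N \<ge> 2"
    and "group G" and "torsion_free G"
    and "grp_ring_elem G c" and "grp_ring_elem G d"
    and "grank c = M" and "grank d = N"
    and "c \<one>\<^bsub>G\<^esub> \<noteq> 0" and "d \<one>\<^bsub>G\<^esub> \<noteq> 0"
    and "gr_mult G c d = gr_one G"
    and "inj_on cc {..<M}" and "cc ` {..<M} = gsupp c" and "cc 0 = \<one>\<^bsub>G\<^esub>"
    and "inj_on dd {..<N}" and "dd ` {..<N} = gsupp d" and "dd 0 = \<one>\<^bsub>G\<^esub>"
    and "\<forall>i<M. r i = c (cc i)" and "\<forall>j<N. s j = d (dd j)"
    and "partition_on (grid M N) \<sigma>"
    and "\<forall>i j i' j'. (i, j) \<in> grid M N \<and> (i', j') \<in> grid M N \<longrightarrow>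
           (same_block \<sigma> (i, j) (i', j') \<longleftrightarrow>
            cc i \<otimes>\<^bsub>G\<^esub> dd j = cc i' \<otimes>\<^bsub>G\<^esub> dd j')"
    and "partition_on (grid M N) \<pi>" and "refines \<pi> \<sigma>"
    and "realizable \<pi> r s"
    and "\<forall>m n. 2 \<le> m \<and> m \<le> M \<and> 2 \<le> n \<and> n \<le> N \<and> (m, n) \<noteq> (M, N) \<longrightarrow>
           \<not> (\<exists>(H :: nat monoid) (x :: nat \<Rightarrow> 'k) y.
                 group H \<and> torsion_free H \<and> grp_ring_elem H x \<and> grp_ring_elem H y \<and>
                 grank x = m \<and> grank y = n \<and> gr_mult H x y = gr_one H)"
  shows "\<not> (\<exists>R C. proper_invariant_subgrid \<pi> M N R C)"
proof
  assume "\<exists>R C. proper_invariant_subgrid \<pi> M N R C"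
  then obtain R C where inv: "invariant_subgrid \<pi> M N R C" and proper: "card R < M \<or> card C < N"
    unfolding proper_invariant_subgrid_def by blast
  then have R: "R \<subseteq> {..<M}" "2 \<le> card R" and C: "C \<subseteq> {..<N}" "2 \<le> card C"
    unfolding invariant_subgrid_def by auto
  let ?x = "gr_restrict c (cc ` R)" and ?y = "gr_restrict d (dd ` C)"
  have blocks: "cc i \<otimes>\<^bsub>G\<^esub> dd j = cc i' \<otimes>\<^bsub>G\<^esub> dd j'"
    if "(i, j) \<in> grid M N" "(i', j') \<in> grid M N" "same_block \<pi> (i, j) (i', j')" for i j i' j'
    using assms(21) that same_block_refines[OF assms(23) that(3)] by blast
  have "gr_mult G ?x ?y = gr_one G"
    using assms(13,16) by (intro gr_mult_restrict_invariant_subgrid[OF group.is_monoid[OF assms(3)] assms(14,17,12,15)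
        _ _ assms(18,19,22,24) blocks inv]) simp_all
  moreover have "grp_ring_elem G ?x" "grp_ring_elem G ?y"
    using assms(5,6) by (simp_all add: grp_ring_elem_gr_restrict)
  moreover have "grank ?x = card R" "grank ?y = card C"
    using image_mono[OF R(1), of cc] image_mono[OF C(1), of dd] assms(13,16)
    by (simp_all add: grank_gr_restrict inj_on_subset[OF assms(12) R(1)] inj_on_subset[OF assms(15) C(1)])
  ultimately obtain H :: "nat monoid" and x y :: "nat \<Rightarrow> 'k" where "group H" "torsion_free H"
    "grp_ring_elem H x" "grp_ring_elem H y" "grank x = card R" "grank y = card C"
    "gr_mult H x y = gr_one H"
    using ex_nat_torsion_free_inverse_pair[OF assms(4)] by metis
  moreover have "card R \<le> M" "card C \<le> N"
    using card_mono[OF _ R(1)] card_mono[OF _ C(1)] by simp_all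
  ultimately show False
    using assms(25) R(2) C(2) proper by fastforce
qed

end
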